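(* Let $(N,C,\mathbf{A},k)$ be an instance with $|N|=n$ having at least one cohesive group, and let $c_{\max}$ be its maximum JR degree. If $n>k^2(c_{\max}-1)$, then the committee output by GreedyAV has JR degree $c_{\max}$.
   Context: An instance consists of voters $N=\{1,\dots,n\}$, candidates $C$, approval ballots $A_i\subseteq C$ for $i\in N$, and a committee size $k$ with $1\le k\le|C|$. $N'\subseteq N$ is a cohesive group if $|N'|\ge n/k$ and $|\bigcap_{i\in N'}A_i|\ge1$. A size-$k$ committee $W\subseteq C$ achieves JR degree $c$ if every cohesive group contains at least $c$ voters $i$ with $|A_i\cap W|\ge1$; its JR degree is the largest such $c$, and the maximum JR degree of the instance is the maximum over all size-$k$ committees. GreedyAV: start with $W=\emptyset$ and remaining voters $R=N$; repeat $k$ times: choose a candidate $c\notin W$ approved by the maximum number of voters in $R$ (ties arbitrary), add $c$ to $W$, and remove from $R$ all voters approving $c$; output $W$. *)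

theory Defs
  imports Complex_Main
begin

definition cohesive :: "nat set \<Rightarrow> (nat \<Rightarrow> 'c set) \<Rightarrow> nat \<Rightarrow> nat set \<Rightarrow> bool" where
  "cohesive N A k N' \<longleftrightarrow> N' \<subseteq> N \<and> real (card N') \<ge> real (card N) / real k
      \<and> card (\<Inter>i\<in>N'. A i) \<ge> 1"

definition achieves_jr_degree ::
  "nat set \<Rightarrow> (nat \<Rightarrow> 'c set) \<Rightarrow> nat \<Rightarrow> 'c set \<Rightarrow> nat \<Rightarrow> bool" where
  "achieves_jr_degree N A k W c \<longleftrightarrow>
     (\<forall>N'. cohesive N A k N' \<longrightarrow> card {i \<in> N'. card (A i \<inter> W) \<ge> 1} \<ge> c)"

definition jr_degree :: "nat set \<Rightarrow> (nat \<Rightarrow> 'c set) \<Rightarrow> nat \<Rightarrow> 'c set \<Rightarrow> nat" where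
  "jr_degree N A k W = (GREATEST c. achieves_jr_degree N A k W c)"

definition max_jr_degree :: "nat set \<Rightarrow> 'c set \<Rightarrow> (nat \<Rightarrow> 'c set) \<Rightarrow> nat \<Rightarrow> nat" where
  "max_jr_degree N C A k = Max {jr_degree N A k W | W. W \<subseteq> C \<and> card W = k}"

definition av_score :: "nat set \<Rightarrow> (nat \<Rightarrow> 'c set) \<Rightarrow> 'c \<Rightarrow> nat" where
  "av_score R A c = card {i \<in> R. c \<in> A i}"

text \<open>A run of GreedyAV (with arbitrary tie-breaking) is a list ws of the candidates
  picked in order; the remaining voters before step j are those approving none of the
  first j picks.\<close>
definition greedyAV_run :: "nat set \<Rightarrow> 'c set \<Rightarrow> (nat \<Rightarrow> 'c set) \<Rightarrow> nat \<Rightarrow> 'c list \<Rightarrow> bool" where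
  "greedyAV_run N C A k ws \<longleftrightarrow> length ws = k \<and>
     (\<forall>j<k. let Wj = set (take j ws); Rj = {i \<in> N. A i \<inter> Wj = {}} in
        ws ! j \<in> C - Wj \<and>
        (\<forall>c \<in> C - Wj. av_score Rj A c \<le> av_score Rj A (ws ! j)))"

definition greedyAV_output :: "nat set \<Rightarrow> 'c set \<Rightarrow> (nat \<Rightarrow> 'c set) \<Rightarrow> nat \<Rightarrow> 'c set \<Rightarrow> bool" where
  "greedyAV_output N C A k W \<longleftrightarrow> (\<exists>ws. greedyAV_run N C A k ws \<and> W = set ws)"

end

theory Submission
  imports Defs
begin

text \<open>Let \<open>c\<close> be attained by some committee and suppose a cohesive group \<open>G\<close> has fewer than
  \<open>c\<close> voters represented by the GreedyAV committee. Then the candidate \<open>a\<close> approved by all of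
  \<open>G\<close> was never picked, so at every step it was available and approved by the \<open>u\<close> members of
  \<open>G\<close> that remain unrepresented until the end. Hence every greedy pick removes at least \<open>u\<close>
  voters and the first one at least \<open>|G|\<close>, so \<open>n \<ge> |G| + k u\<close>. Cohesiveness gives
  \<open>n \<le> k |G|\<close> and \<open>u > |G| - c\<close>; together these force \<open>n \<le> k\<^sup>2 (c - 1)\<close>.\<close>

definition unrepresented :: "nat set \<Rightarrow> (nat \<Rightarrow> 'c set) \<Rightarrow> 'c set \<Rightarrow> nat set" where
  "unrepresented N A W = {i \<in> N. A i \<inter> W = {}}"

lemma unrepresented_empty [simp]: "unrepresented N A {} = N"
  by (simp add: unrepresented_def)

lemma unrepresented_antimono: "W \<subseteq> W' \<Longrightarrow> unrepresented N A W' \<subseteq> unrepresented N A W"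
  by (auto simp: unrepresented_def)

lemma card_unrepresented_insert:
  assumes "finite N"
  shows "card (unrepresented N A W) =
    card (unrepresented N A (insert c W)) + av_score (unrepresented N A W) A c"
proof -
  have "card (unrepresented N A W) =
      card (unrepresented N A (insert c W) \<union> {i \<in> unrepresented N A W. c \<in> A i})"
    by (rule arg_cong[where f = card]) (auto simp: unrepresented_def)
  also have "\<dots> = card (unrepresented N A (insert c W)) + card {i \<in> unrepresented N A W. c \<in> A i}"
    using assms by (intro card_Un_disjoint) (auto simp: unrepresented_def)
  finally show ?thesis by (simp add: av_score_def)
qed

lemma card_represented_add_unrepresented:
  assumes "finite G" "G \<subseteq> N" "finite W"
  shows "card {i \<in> G. 1 \<le> card (A i \<inter> W)} + card (G \<inter> unrepresented N A W) = card G"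
proof -
  have "card {i \<in> G. 1 \<le> card (A i \<inter> W)} + card (G \<inter> unrepresented N A W) =
      card ({i \<in> G. 1 \<le> card (A i \<inter> W)} \<union> (G \<inter> unrepresented N A W))"
    using assms by (intro card_Un_disjoint[symmetric]) (auto simp: unrepresented_def)
  also have "{i \<in> G. 1 \<le> card (A i \<inter> W)} \<union> (G \<inter> unrepresented N A W) = G"
    using assms by (auto simp: unrepresented_def Suc_le_eq card_gt_0_iff)
  finally show ?thesis .
qed

lemma cohesive_card_le:
  assumes "cohesive N A k G" "1 \<le> k"
  shows "card N \<le> k * card G"
proof -
  have "real (card N) \<le> real k * real (card G)"
    using assms by (simp add: cohesive_def divide_le_eq mult.commute)
  then show ?thesis by (simp flip: of_nat_mult)
qed

lemma achieves_jr_degree_le_card: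
  assumes "finite N" "cohesive N A k G" "achieves_jr_degree N A k W c"
  shows "c \<le> card G"
proof -
  have "finite G" using assms(1,2) by (meson cohesive_def finite_subset)
  have "c \<le> card {i \<in> G. 1 \<le> card (A i \<inter> W)}"
    using assms(2,3) by (simp add: achieves_jr_degree_def)
  also have "\<dots> \<le> card G" using \<open>finite G\<close> by (intro card_mono) auto
  finally show ?thesis .
qed

lemma
  assumes "finite N" "cohesive N A k G"
  shows achieves_jr_degree_jr_degree: "achieves_jr_degree N A k W (jr_degree N A k W)"
    and achieves_jr_degree_le_jr_degree:
      "achieves_jr_degree N A k W c \<Longrightarrow> c \<le> jr_degree N A k W"
proof -
  have bounded: "\<forall>c. achieves_jr_degree N A k W c \<longrightarrow> c \<le> card G"
    using achieves_jr_degree_le_card[OF assms] by blast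
  have "achieves_jr_degree N A k W 0" by (simp add: achieves_jr_degree_def)
  then show "achieves_jr_degree N A k W (jr_degree N A k W)"
    unfolding jr_degree_def by (rule GreatestI_nat[where b = "card G"]) (use bounded in auto)
  show "achieves_jr_degree N A k W c \<Longrightarrow> c \<le> jr_degree N A k W"
    unfolding jr_degree_def using bounded Greatest_le_nat by blast
qed

lemma
  assumes "finite C"
  shows jr_degree_le_max_jr_degree:
      "W \<subseteq> C \<Longrightarrow> card W = k \<Longrightarrow> jr_degree N A k W \<le> max_jr_degree N C A k"
    and max_jr_degree_attained:
      "k \<le> card C \<Longrightarrow>
        \<exists>W. W \<subseteq> C \<and> card W = k \<and> jr_degree N A k W = max_jr_degree N C A k"
proof -
  let ?S = "{jr_degree N A k W | W. W \<subseteq> C \<and> card W = k}"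
  have "?S \<subseteq> (\<lambda>W. jr_degree N A k W) ` Pow C" by blast
  then have "finite ?S" using assms by (meson finite_Pow_iff finite_imageI finite_subset)
  then show "W \<subseteq> C \<Longrightarrow> card W = k \<Longrightarrow> jr_degree N A k W \<le> max_jr_degree N C A k"
    unfolding max_jr_degree_def by (intro Max_ge) auto
  assume "k \<le> card C"
  then obtain W where "W \<subseteq> C" "card W = k" by (rule obtain_subset_with_card_n)
  then have "?S \<noteq> {}" by blast
  with \<open>finite ?S\<close> have "max_jr_degree N C A k \<in> ?S" unfolding max_jr_degree_def by (rule Max_in)
  then show "\<exists>W. W \<subseteq> C \<and> card W = k \<and> jr_degree N A k W = max_jr_degree N C A k" by auto
qed

lemma greedyAV_run_step:
  assumes "greedyAV_run N C A k ws" "j < k"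
  shows "ws ! j \<in> C - set (take j ws)"
    and "c \<in> C - set (take j ws) \<Longrightarrow>
      av_score (unrepresented N A (set (take j ws))) A c \<le>
      av_score (unrepresented N A (set (take j ws))) A (ws ! j)"
  using assms by (auto simp: greedyAV_run_def unrepresented_def Let_def)

lemma greedyAV_run_committee:
  assumes "greedyAV_run N C A k ws"
  shows "set ws \<subseteq> C" and "card (set ws) = k"
proof -
  have len: "length ws = k" using assms by (simp add: greedyAV_run_def)
  have "distinct (take j ws)" if "j \<le> k" for j
    using that
  proof (induction j)
    case (Suc j)
    then show ?case
      using greedyAV_run_step(1)[OF assms, of j] len by (simp add: take_Suc_conv_app_nth)
  qed simp
  then show "card (set ws) = k" using len by (metis distinct_card order.refl take_all)
  show "set ws \<subseteq> C"
    using greedyAV_run_step(1)[OF assms] len by (auto simp: in_set_conv_nth)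
qed

lemma greedyAV_run_card_eq_sum:
  assumes "finite N" "greedyAV_run N C A k ws"
  shows "card N = card (unrepresented N A (set ws)) +
    (\<Sum>j<k. av_score (unrepresented N A (set (take j ws))) A (ws ! j))"
proof -
  have len: "length ws = k" using assms(2) by (simp add: greedyAV_run_def)
  have "card N = card (unrepresented N A (set (take j ws))) +
      (\<Sum>i<j. av_score (unrepresented N A (set (take i ws))) A (ws ! i))" if "j \<le> k" for j
    using that
  proof (induction j)
    case (Suc j)
    then have "set (take (Suc j) ws) = insert (ws ! j) (set (take j ws))"
      using len by (simp add: take_Suc_conv_app_nth)
    with Suc card_unrepresented_insert[OF assms(1)] show ?case by simp
  qed simp
  from this[of k] show ?thesis using len by simp
qed

lemma greedyAV_run_card_ge:
  assumes "finite N" "greedyAV_run N C A k ws" "1 \<le> k"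
    and "a \<in> C - set ws" "G \<subseteq> N" "\<forall>i\<in>G. a \<in> A i"
  shows "card G + k * card (G \<inter> unrepresented N A (set ws)) \<le> card N"
proof -
  define R where "R j = unrepresented N A (set (take j ws))" for j
  define u where "u = card (G \<inter> unrepresented N A (set ws))"
  have finR: "finite (R j)" for j using assms(1) by (simp add: R_def unrepresented_def)
  have score_ge: "card (G \<inter> R j) \<le> av_score (R j) A (ws ! j)" if "j < k" for j
  proof -
    have "a \<in> C - set (take j ws)" using assms(4) by (auto dest: in_set_takeD)
    then have "av_score (R j) A a \<le> av_score (R j) A (ws ! j)"
      unfolding R_def by (rule greedyAV_run_step(2)[OF assms(2) \<open>j < k\<close>])
    moreover have "card (G \<inter> R j) \<le> av_score (R j) A a"
      unfolding av_score_def using assms(6) finR by (intro card_mono) auto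
    ultimately show ?thesis by simp
  qed
  have "u \<le> card (G \<inter> R j)" for j
  proof -
    have "unrepresented N A (set ws) \<subseteq> R j"
      unfolding R_def by (rule unrepresented_antimono[OF set_take_subset])
    then show ?thesis unfolding u_def using finR[of j] by (intro card_mono) auto
  qed
  then have later: "u \<le> av_score (R (Suc j)) A (ws ! Suc j)" if "Suc j < k" for j
    using score_ge[OF that] order_trans by blast
  have first: "card G \<le> av_score (R 0) A (ws ! 0)"
    using score_ge[of 0] assms(3,5) by (simp add: R_def Int_absorb2)
  obtain k' where k': "k = Suc k'" using assms(3) by (cases k) auto
  have "(\<Sum>j<k. av_score (R j) A (ws ! j)) =
      av_score (R 0) A (ws ! 0) + (\<Sum>j<k'. av_score (R (Suc j)) A (ws ! Suc j))"
    unfolding k' by (rule sum.lessThan_Suc_shift)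
  moreover have "k' * u \<le> (\<Sum>j<k'. av_score (R (Suc j)) A (ws ! Suc j))"
    using sum_bounded_below[of "{..<k'}" u] later k' by simp
  ultimately have "card G + k' * u \<le> (\<Sum>j<k. av_score (R j) A (ws ! j))"
    using first by linarith
  moreover have "u \<le> card (unrepresented N A (set ws))"
    unfolding u_def using assms(1) by (auto intro!: card_mono simp: unrepresented_def)
  ultimately show ?thesis
    using greedyAV_run_card_eq_sum[OF assms(1,2)] by (simp add: R_def u_def k')
qed

lemma counting_bound_arith:
  fixes n k g r u c :: nat
  assumes "r + u = g" "r < c" "g + k * u \<le> n" "n \<le> k * g"
  shows "int n \<le> int k ^ 2 * (int c - 1)"
proof -
  have "int k * (int g - (int c - 1)) \<le> int k * int u"
    using assms(1,2) by (intro mult_left_mono) auto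
  then have g_le: "int g \<le> int k * (int c - 1)"
    using assms(3,4) by (simp add: algebra_simps flip: of_nat_mult of_nat_add)
  have "int n \<le> int k * int g" using assms(4) by (simp flip: of_nat_mult)
  also have "\<dots> \<le> int k * (int k * (int c - 1))" using g_le by (simp add: mult_left_mono)
  also have "\<dots> = int k ^ 2 * (int c - 1)" by (simp add: power2_eq_square)
  finally show ?thesis .
qed

lemma greedyAV_run_achieves_jr_degree:
  assumes "finite N" "\<forall>i\<in>N. A i \<subseteq> C" "1 \<le> k" "greedyAV_run N C A k ws"
    and "achieves_jr_degree N A k W' c"
    and "int k ^ 2 * (int c - 1) < int (card N)"
  shows "achieves_jr_degree N A k (set ws) c"
  unfolding achieves_jr_degree_def
proof (intro allI impI)
  fix G assume coh: "cohesive N A k G"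
  have GN: "G \<subseteq> N" using coh by (simp add: cohesive_def)
  then have "finite G" using assms(1) by (rule finite_subset)
  let ?r = "card {i \<in> G. 1 \<le> card (A i \<inter> set ws)}"
  let ?u = "card (G \<inter> unrepresented N A (set ws))"
  have parts: "?r + ?u = card G"
    using card_represented_add_unrepresented[OF \<open>finite G\<close> GN List.finite_set] by simp
  show "c \<le> ?r"
  proof (rule ccontr)
    assume "\<not> c \<le> ?r"
    then have r_lt: "?r < c" by simp
    have "c \<le> card G" using achieves_jr_degree_le_card[OF assms(1) coh assms(5)] .
    then have "G \<noteq> {}" using r_lt by auto
    obtain a where a: "\<forall>i\<in>G. a \<in> A i"
      using coh by (auto simp: cohesive_def Suc_le_eq card_gt_0_iff)
    have "a \<in> C" using \<open>G \<noteq> {}\<close> a GN assms(2) by blast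
    have "a \<notin> set ws"
    proof
      assume "a \<in> set ws"
      then have "G \<inter> unrepresented N A (set ws) = {}" using a by (auto simp: unrepresented_def)
      then show False using parts r_lt \<open>c \<le> card G\<close> by simp
    qed
    have "card G + k * ?u \<le> card N"
      using greedyAV_run_card_ge[OF assms(1,4,3)] \<open>a \<in> C\<close> \<open>a \<notin> set ws\<close> GN a by blast
    then have "int (card N) \<le> int k ^ 2 * (int c - 1)"
      using counting_bound_arith[OF parts r_lt] cohesive_card_le[OF coh assms(3)] by blast
    then show False using assms(6) by simp
  qed
qed

theorem proposition4:
  fixes n k :: nat and C :: "'c set" and A :: "nat \<Rightarrow> 'c set" and W :: "'c set"
  assumes finC: "finite C"
    and ballots: "\<forall>i\<in>{1..n}. A i \<subseteq> C"
    and k_pos: "1 \<le> k" and k_le: "k \<le> card C"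
    and has_cohesive: "\<exists>N'. cohesive {1..n} A k N'"
    and large: "int n > int k ^ 2 * (int (max_jr_degree {1..n} C A k) - 1)"
    and greedy: "greedyAV_output {1..n} C A k W"
  shows "jr_degree {1..n} A k W = max_jr_degree {1..n} C A k"
proof (rule antisym)
  obtain ws where run: "greedyAV_run {1..n} C A k ws" and W: "W = set ws"
    using greedy by (auto simp: greedyAV_output_def)
  show "jr_degree {1..n} A k W \<le> max_jr_degree {1..n} C A k"
    using jr_degree_le_max_jr_degree[OF finC] greedyAV_run_committee[OF run] W by blast
  obtain G where coh: "cohesive {1..n} A k G" using has_cohesive by blast
  obtain W' where "jr_degree {1..n} A k W' = max_jr_degree {1..n} C A k"
    using max_jr_degree_attained[OF finC k_le] by blast
  then have "achieves_jr_degree {1..n} A k W' (max_jr_degree {1..n} C A k)"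
    using achieves_jr_degree_jr_degree[OF _ coh] by (metis finite_atLeastAtMost)
  then have "achieves_jr_degree {1..n} A k W (max_jr_degree {1..n} C A k)"
    using greedyAV_run_achieves_jr_degree[OF _ ballots k_pos run] large W by simp
  then show "max_jr_degree {1..n} C A k \<le> jr_degree {1..n} A k W"
    using achieves_jr_degree_le_jr_degree[OF _ coh] by simp
qed

end
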